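(* The map $\pi\mapsto\mathbf w(\pi)$ is a bijection from the set of extended link patterns on $\{1,\dots,N\}$ to the set of words of length $N$ (elements of $\{0,1\}^N$).
   Context: A link pattern on a finite totally ordered set is a partition of it into pairs that are pairwise noncrossing (no $i<j<k<\ell$ with $\{i,k\}$ and $\{j,\ell\}$ both pairs). An extended link pattern $\pi$ on $\{1,\dots,N\}$ consists of integers $1\le\ell_1<\dots<\ell_a$ (left points) and $r_1<\dots<r_b\le N$ (right points), $a,b\ge 0$, with $\ell_a<r_1$ when both are present, together with a link pattern on each maximal interval of integers of $\{1,\dots,N\}$ containing none of the left or right points. The word $\mathbf w(\pi)=w_1\cdots w_N$ is defined by $w_{\ell_k}=1$ for left points, $w_{r_k}=0$ for right points, and, for each pair $\{i,j\}$ with $i<j$ of one of the link patterns, $w_i=0$ and $w_j=1$. *)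

theory Defs
  imports Main
begin

definition link_pattern :: "nat set \<Rightarrow> nat set set \<Rightarrow> bool" where
  "link_pattern S P \<longleftrightarrow>
     \<Union>P = S \<and>
     (\<forall>p\<in>P. card p = 2) \<and>
     (\<forall>p\<in>P. \<forall>q\<in>P. p \<noteq> q \<longrightarrow> p \<inter> q = {}) \<and>
     \<not> (\<exists>i j k l. i < j \<and> j < k \<and> k < l \<and> {i, k} \<in> P \<and> {j, l} \<in> P)"

definition max_intervals :: "nat \<Rightarrow> nat set \<Rightarrow> nat set \<Rightarrow> nat set set" where
  "max_intervals N L R =
     {I. I \<noteq> {} \<and> (\<exists>a b. I = {a..b}) \<and> I \<subseteq> {1..N} - (L \<union> R) \<and>
         (\<forall>J. (\<exists>a b. J = {a..b}) \<and> I \<subseteq> J \<and> J \<subseteq> {1..N} - (L \<union> R) \<longrightarrow> J = I)}"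

text \<open>An extended link pattern on {1..N} is a triple (L, R, P): the set L of left points,
  the set R of right points (every left point smaller than every right point), and P,
  the union of the chosen link patterns on the maximal intervals (each block of P lies
  in one maximal interval, and its restriction to each maximal interval is a link pattern).\<close>
definition ext_link_patterns :: "nat \<Rightarrow> (nat set \<times> nat set \<times> nat set set) set" where
  "ext_link_patterns N =
     {(L, R, P). L \<subseteq> {1..N} \<and> R \<subseteq> {1..N} \<and> (\<forall>l\<in>L. \<forall>r\<in>R. l < r) \<and>
        (\<forall>I\<in>max_intervals N L R. link_pattern I {p\<in>P. p \<subseteq> I}) \<and>
        (\<forall>p\<in>P. \<exists>I\<in>max_intervals N L R. p \<subseteq> I)}"

text \<open>The word w(pi) = w_1 ... w_N, as a list of length N (position k of {1..N} is entry k-1).\<close>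
definition word :: "nat \<Rightarrow> nat set \<times> nat set \<times> nat set set \<Rightarrow> nat list" where
  "word N \<pi> = (case \<pi> of (L, R, P) \<Rightarrow>
     map (\<lambda>k. if k \<in> L then 1 else if k \<in> R then 0
               else if (\<exists>p\<in>P. k \<in> p \<and> k = Max p) then 1 else 0) [1..<N+1])"

end

theory Submission
  imports Defs
begin

text \<open>Read a word as a lattice path stepping up at each 0 and down at each 1. In the word of an
  extended link pattern every block {i < j} is an arc of the path: it returns at j to its height
  before i and stays strictly above it in between, because the inside of a block is tiled by
  nested blocks. Arcs with a common endpoint coincide, so the word determines the blocks, and the
  left and right points are then the remaining 1s and 0s. Conversely a binary word is decoded by
  taking the arcs as blocks, the 1s where the path reaches a new minimum as left points and the
  0s below which the path never returns as right points.\<close>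

definition free :: "nat \<Rightarrow> nat set \<Rightarrow> nat set \<Rightarrow> nat set" where
  "free N L R = {1..N} - (L \<union> R)"

lemma max_interval_bounds:
  assumes "I \<in> max_intervals N L R"
  obtains a b where "a \<le> b" "I = {a..b}" "I \<subseteq> free N L R"
proof -
  obtain a b where "I = {a..b}" "I \<noteq> {}" "I \<subseteq> free N L R"
    using assms unfolding max_intervals_def free_def by auto
  then show thesis using that by auto
qed

lemma max_interval_maximal:
  assumes "I \<in> max_intervals N L R" "I \<subseteq> {a..b}" "{a..b} \<subseteq> free N L R"
  shows "{a..b} = I"
  using assms unfolding max_intervals_def free_def by blast

lemma max_intervals_eq_if_meet:
  assumes "I \<in> max_intervals N L R" "J \<in> max_intervals N L R" "x \<in> I" "x \<in> J"
  shows "I = J"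
proof -
  obtain a b where ab: "I = {a..b}" "I \<subseteq> free N L R" by (rule max_interval_bounds[OF assms(1)])
  obtain c d where cd: "J = {c..d}" "J \<subseteq> free N L R" by (rule max_interval_bounds[OF assms(2)])
  have U: "{min a c..max b d} = I \<union> J" using ab cd assms(3,4) by auto
  then have "{min a c..max b d} \<subseteq> free N L R" using ab cd by blast
  then show ?thesis using max_interval_maximal[OF assms(1)] max_interval_maximal[OF assms(2)] U
    by (metis sup_ge1 sup_ge2)
qed

text \<open>A longest free interval containing the given one is maximal.\<close>
lemma interval_in_max_interval:
  assumes "c \<le> d" "{c..d} \<subseteq> free N L R"
  obtains I where "I \<in> max_intervals N L R" "{c..d} \<subseteq> I"
proof -
  define Q where "Q = (\<lambda>(a::nat, b::nat). {c..d} \<subseteq> {a..b} \<and> {a..b} \<subseteq> free N L R)"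
  have "Q (c, d)" using assms unfolding Q_def by auto
  moreover have "\<forall>y. Q y \<longrightarrow> (\<lambda>(a, b). b - a) y < Suc N"
  proof (intro allI impI)
    fix y assume "Q y"
    then obtain a b where "y = (a, b)" "{c..d} \<subseteq> {a..b}" "{a..b} \<subseteq> free N L R"
      unfolding Q_def by auto
    moreover have "b \<in> {a..b}" using calculation(2) assms(1) by auto
    ultimately have "b \<le> N" unfolding free_def by auto
    then show "(\<lambda>(a, b). b - a) y < Suc N" using \<open>y = (a, b)\<close> by simp
  qed
  ultimately obtain a b where Qab: "Q (a, b)"
    and longest: "\<And>a' b'. Q (a', b') \<Longrightarrow> b' - a' \<le> b - a"
    using ex_has_greatest_nat[of Q] by (metis (no_types, lifting) case_prod_conv surj_pair)
  have sub: "{c..d} \<subseteq> {a..b}" "{a..b} \<subseteq> free N L R" using Qab unfolding Q_def by auto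
  have "{a..b} \<in> max_intervals N L R"
    unfolding max_intervals_def
  proof (intro CollectI conjI allI impI)
    show "{a..b} \<noteq> {}" "\<exists>a' b'. {a..b} = {a'..b'}" using sub(1) assms(1) by auto
    show "{a..b} \<subseteq> {1..N} - (L \<union> R)" using sub(2) unfolding free_def .
    fix J assume J: "(\<exists>a b. J = {a..b}) \<and> {a..b} \<subseteq> J \<and> J \<subseteq> {1..N} - (L \<union> R)"
    then obtain a' b' where J': "J = {a'..b'}" by blast
    have "a' \<le> a" "b \<le> b'" "a \<le> b" using J J' sub(1) assms(1) by auto
    moreover have "Q (a', b')" using J J' sub unfolding Q_def free_def by auto
    ultimately show "J = {a..b}" using longest[of a' b'] J' by force
  qed
  then show thesis using that sub(1) by blast
qed

primrec height :: "(nat \<Rightarrow> nat) \<Rightarrow> nat \<Rightarrow> int" where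
  "height g 0 = 0"
| "height g (Suc k) = height g k + (if g (Suc k) = 0 then 1 else -1)"

definition arc :: "(nat \<Rightarrow> nat) \<Rightarrow> nat \<Rightarrow> nat \<Rightarrow> bool" where
  "arc g i j \<longleftrightarrow> i < j \<and> height g j = height g (i - 1) \<and>
     (\<forall>m. i \<le> m \<and> m < j \<longrightarrow> height g (i - 1) < height g m)"

lemma arc_above:
  "arc g i j \<Longrightarrow> i \<le> m \<Longrightarrow> m < j \<Longrightarrow> height g (i - 1) < height g m"
  unfolding arc_def by blast

lemma arc_unique_right:
  assumes "arc g i j" "arc g i j'"
  shows "j = j'"
proof -
  have "\<not> j < j'" using arc_above[OF assms(2), of j] assms(1) unfolding arc_def by auto
  moreover have "\<not> j' < j" using arc_above[OF assms(1), of j'] assms(2) unfolding arc_def by auto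
  ultimately show ?thesis by simp
qed

lemma arc_unique_left:
  assumes "arc g i j" "arc g i' j"
  shows "i = i'"
proof -
  have eq: "height g (i - 1) = height g (i' - 1)" using assms unfolding arc_def by simp
  have "\<not> i < i'"
  proof
    assume "i < i'"
    moreover have "i' < j" using assms(2) unfolding arc_def by simp
    ultimately have "height g (i - 1) < height g (i' - 1)"
      by (intro arc_above[OF assms(1)]) auto
    then show False using eq by simp
  qed
  moreover have "\<not> i' < i"
  proof
    assume "i' < i"
    moreover have "i < j" using assms(1) unfolding arc_def by simp
    ultimately have "height g (i' - 1) < height g (i - 1)"
      by (intro arc_above[OF assms(2)]) auto
    then show False using eq by simp
  qed
  ultimately show ?thesis by simp
qed

lemma arcs_noncrossing:
  assumes "arc g i k" "arc g j l" "i < j" "j < k" "k < l"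
  shows False
proof -
  have "height g (i - 1) < height g (j - 1)" using arc_above[OF assms(1), of "j - 1"] assms(3,4) by simp
  also have "\<dots> < height g k" using arc_above[OF assms(2), of k] assms(4,5) by simp
  finally show False using assms(1) unfolding arc_def by simp
qed

lemma height_pred: "1 \<le> k \<Longrightarrow> height g k = height g (k - 1) + (if g k = 0 then 1 else -1)"
  by (cases k) auto

lemma arc_letters:
  assumes "arc g i j" "1 \<le> i"
  shows "g i = 0" "g j \<noteq> 0"
proof -
  have "i < j" using assms(1) unfolding arc_def by simp
  have "height g (i - 1) < height g i" using arc_above[OF assms(1), of i] \<open>i < j\<close> by simp
  then show "g i = 0" using height_pred[OF assms(2), of g] by (auto split: if_splits)
  have "height g (i - 1) < height g (j - 1)" by (rule arc_above[OF assms(1)]) (use \<open>i < j\<close> in auto)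
  then have "height g j < height g (j - 1)" using assms(1) unfolding arc_def by simp
  then show "g j \<noteq> 0" using height_pred[of j g] \<open>i < j\<close> by (auto split: if_splits)
qed

definition letter :: "nat set \<Rightarrow> nat set \<Rightarrow> nat set set \<Rightarrow> nat \<Rightarrow> nat" where
  "letter L R P k = (if k \<in> L then 1 else if k \<in> R then 0
     else if (\<exists>p\<in>P. k \<in> p \<and> k = Max p) then 1 else 0)"

lemma word_eq_map_letter: "word N (L, R, P) = map (letter L R P) [1..<N+1]"
  by (simp add: word_def letter_def)

lemma nth_word: "1 \<le> k \<Longrightarrow> k \<le> N \<Longrightarrow> word N (L, R, P) ! (k - 1) = letter L R P k"
  by (simp add: word_eq_map_letter del: upt_Suc)

lemma word_binary: "word N \<pi> \<in> {w. length w = N \<and> set w \<subseteq> {0, 1}}"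
proof -
  obtain L R P where "\<pi> = (L, R, P)" by (cases \<pi>) auto
  then show ?thesis by (auto simp: word_eq_map_letter letter_def simp del: upt_Suc)
qed

locale ext_pattern =
  fixes N :: nat and L R :: "nat set" and P :: "nat set set" and g :: "nat \<Rightarrow> nat"
  assumes ext: "(L, R, P) \<in> ext_link_patterns N"
    and reads_word: "\<And>k. 1 \<le> k \<Longrightarrow> k \<le> N \<Longrightarrow> g k = letter L R P k"
begin

lemma L_subset: "L \<subseteq> {1..N}"
  and R_subset: "R \<subseteq> {1..N}"
  and left_less_right: "l \<in> L \<Longrightarrow> r \<in> R \<Longrightarrow> l < r"
  and link_pattern_on_max_interval:
    "I \<in> max_intervals N L R \<Longrightarrow> link_pattern I {p\<in>P. p \<subseteq> I}"
  and block_in_max_interval: "p \<in> P \<Longrightarrow> \<exists>I\<in>max_intervals N L R. p \<subseteq> I"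
  using ext unfolding ext_link_patterns_def by auto

lemma letter_left: "k \<in> L \<Longrightarrow> g k = 1"
  using L_subset reads_word unfolding letter_def by auto

lemma letter_right:
  assumes "k \<in> R"
  shows "g k = 0"
proof -
  have "k \<notin> L" using left_less_right[of k k] assms by blast
  then show ?thesis using assms R_subset reads_word[of k] unfolding letter_def by auto
qed

lemma block_bounds:
  assumes "p \<in> P"
  obtains a b where "a < b" "p = {a, b}" "{a..b} \<subseteq> free N L R"
proof -
  obtain I where I: "I \<in> max_intervals N L R" "p \<subseteq> I" using block_in_max_interval[OF assms] by blast
  have "card p = 2" using link_pattern_on_max_interval[OF I(1)] assms I(2)
    unfolding link_pattern_def by auto
  then obtain x y where xy: "p = {x, y}" "x < y"
  proof -
    obtain u v where "p = {u, v}" "u \<noteq> v" using \<open>card p = 2\<close> by (auto simp: card_2_iff)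
    then show thesis using that[of u v] that[of v u] by (cases "u < v") (auto simp: insert_commute)
  qed
  obtain c d where "I = {c..d}" "I \<subseteq> free N L R" by (rule max_interval_bounds[OF I(1)])
  then have "{x..y} \<subseteq> free N L R" using I(2) xy(1) by auto
  then show thesis using that xy by blast
qed

lemma free_in_block:
  assumes "x \<in> free N L R"
  obtains p where "p \<in> P" "x \<in> p"
proof -
  obtain I where I: "I \<in> max_intervals N L R" "{x..x} \<subseteq> I"
    using interval_in_max_interval[of x x N L R] assms by auto
  have "\<Union>{p\<in>P. p \<subseteq> I} = I"
    using link_pattern_on_max_interval[OF I(1)] unfolding link_pattern_def by auto
  then show thesis using that I(2) by auto
qed

lemma blocks_eq_if_meet:
  assumes "p \<in> P" "q \<in> P" "x \<in> p" "x \<in> q"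
  shows "p = q"
proof -
  obtain I where I: "I \<in> max_intervals N L R" "p \<subseteq> I" using block_in_max_interval[OF assms(1)] by blast
  obtain J where J: "J \<in> max_intervals N L R" "q \<subseteq> J" using block_in_max_interval[OF assms(2)] by blast
  have "I = J" using max_intervals_eq_if_meet[OF I(1) J(1)] I J assms by auto
  then show ?thesis using link_pattern_on_max_interval[OF I(1)] assms I J
    unfolding link_pattern_def by blast
qed

lemma blocks_noncrossing:
  assumes "{i, k} \<in> P" "{j, l} \<in> P" "i < j" "j < k" "k < l"
  shows False
proof -
  obtain I where I: "I \<in> max_intervals N L R" "{i, k} \<subseteq> I" using block_in_max_interval[OF assms(1)] by blast
  obtain J where J: "J \<in> max_intervals N L R" "{j, l} \<subseteq> J" using block_in_max_interval[OF assms(2)] by blast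
  obtain c d where "I = {c..d}" by (rule max_interval_bounds[OF I(1)])
  then have "j \<in> I" using I(2) assms by auto
  then have "I = J" using max_intervals_eq_if_meet[OF I(1) J(1)] J by auto
  then show False using link_pattern_on_max_interval[OF I(1)] assms I J
    unfolding link_pattern_def by blast
qed

lemma block_free:
  assumes "{a, b} \<in> P" "a < b"
  shows "{a..b} \<subseteq> free N L R"
proof -
  obtain u v where "u < v" "{a, b} = {u, v}" "{u..v} \<subseteq> free N L R"
    by (rule block_bounds[OF assms(1)])
  then show ?thesis using assms(2) by (auto simp: doubleton_eq_iff)
qed

lemma block_letters:
  assumes "{a, b} \<in> P" "a < b"
  shows "g a = 0" "g b = 1"
proof -
  have "a \<in> free N L R" "b \<in> free N L R" using block_free[OF assms] assms(2) by auto
  then have reads: "g a = letter L R P a" "g b = letter L R P b" and unmarked: "a \<notin> L \<union> R" "b \<notin> L \<union> R"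
    using reads_word unfolding free_def by auto
  have "\<exists>p\<in>P. b \<in> p \<and> b = Max p" using assms by (intro bexI[of _ "{a, b}"]) auto
  then show "g b = 1" using reads unmarked by (simp add: letter_def)
  have "\<not> (\<exists>p\<in>P. a \<in> p \<and> a = Max p)"
  proof
    assume "\<exists>p\<in>P. a \<in> p \<and> a = Max p"
    then obtain p where p: "p \<in> P" "a \<in> p" "a = Max p" by blast
    have "p = {a, b}" using blocks_eq_if_meet[OF p(1) assms(1) p(2)] by simp
    then have "Max p = b" using assms(2) by simp
    then show False using p(3) assms(2) by linarith
  qed
  then show "g a = 0" using reads unmarked by (simp add: letter_def)
qed

lemma block_subset_free:
  assumes "p \<in> P"
  shows "p \<subseteq> free N L R"
proof -
  obtain a b where "a < b" "p = {a, b}" "{a..b} \<subseteq> free N L R" by (rule block_bounds[OF assms])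
  then show ?thesis by auto
qed

lemma free_partner:
  assumes "x \<in> free N L R"
  obtains z where "z \<noteq> x" "{x, z} \<in> P"
proof -
  obtain p where p: "p \<in> P" "x \<in> p" by (rule free_in_block[OF assms])
  obtain a b where "a < b" "p = {a, b}" by (rule block_bounds[OF p(1)])
  show thesis
  proof (cases "x = a")
    case True
    then show ?thesis using that[of b] \<open>a < b\<close> \<open>p = {a, b}\<close> p by simp
  next
    case False
    then have "x = b" using \<open>p = {a, b}\<close> p by auto
    then show ?thesis using that[of a] \<open>a < b\<close> \<open>p = {a, b}\<close> p by (simp add: insert_commute)
  qed
qed

lemma block_nested:
  assumes "{c, y} \<in> P" "c < y" "{x, z} \<in> P" "c < x" "x < y"
  shows "c < z" "z < y"
proof -
  have "z \<noteq> c" "z \<noteq> y"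
    using blocks_eq_if_meet[OF assms(3) assms(1), of z] assms(2,4,5) by (auto simp: doubleton_eq_iff)
  moreover have "\<not> z < c"
    using blocks_noncrossing[of z x c y] assms by (auto simp: insert_commute)
  moreover have "\<not> y < z"
    using blocks_noncrossing[of c y x z] assms by auto
  ultimately show "c < z" "z < y" by auto
qed

definition matched :: "nat \<Rightarrow> nat \<Rightarrow> bool" where
  "matched c d \<longleftrightarrow> (\<forall>x\<in>{c..d}. \<exists>z\<in>{c..d}. z \<noteq> x \<and> {x, z} \<in> P)"

lemma matched_interior:
  assumes "{c, y} \<in> P" "c < y"
  shows "matched (c + 1) (y - 1)"
  unfolding matched_def
proof
  fix x assume x: "x \<in> {c + 1..y - 1}"
  then have "x \<in> free N L R" using block_free[OF assms] by auto
  then obtain z where "z \<noteq> x" "{x, z} \<in> P" by (rule free_partner)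
  moreover have "c < z" "z < y" using block_nested[OF assms \<open>{x, z} \<in> P\<close>] x by auto
  ultimately show "\<exists>z\<in>{c + 1..y - 1}. z \<noteq> x \<and> {x, z} \<in> P" by auto
qed

lemma matched_after_block:
  assumes "matched c d" "{c, y} \<in> P" "c < y"
  shows "matched (y + 1) d"
  unfolding matched_def
proof
  fix x assume x: "x \<in> {y + 1..d}"
  then have "x \<in> {c..d}" using assms(3) by auto
  then obtain z where z: "z \<in> {c..d}" "z \<noteq> x" "{x, z} \<in> P"
    using assms(1) unfolding matched_def by blast
  have "z \<noteq> c" "z \<noteq> y"
    using blocks_eq_if_meet[OF z(3) assms(2), of z] x assms(3) by (auto simp: doubleton_eq_iff)
  moreover have "\<not> (c < z \<and> z < y)"
    using block_nested[OF assms(2,3), of z x] z(3) x by (auto simp: insert_commute)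
  ultimately have "z \<in> {y + 1..d}" using z(1) by auto
  then show "\<exists>z\<in>{y + 1..d}. z \<noteq> x \<and> {x, z} \<in> P" using z by blast
qed

lemma matched_height:
  "matched c d \<Longrightarrow> c \<le> d + 1 \<Longrightarrow> 1 \<le> c \<Longrightarrow>
    height g d = height g (c - 1) \<and> (\<forall>m\<in>{c - 1..d}. height g (c - 1) \<le> height g m)"
proof (induction "d + 1 - c" arbitrary: c d rule: less_induct)
  case less
  show ?case
  proof (cases "c = d + 1")
    case True
    then show ?thesis by auto
  next
    case False
    then have "c \<in> {c..d}" using less.prems by auto
    then obtain y where y: "y \<in> {c..d}" "y \<noteq> c" "{c, y} \<in> P"
      using less.prems(1) unfolding matched_def by blast
    have "c < y" using y by auto
    have up: "height g c = height g (c - 1) + 1"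
      using height_pred[of c g] block_letters[OF y(3) \<open>c < y\<close>] less.prems(3) by simp
    have down: "height g y = height g (y - 1) - 1"
      using height_pred[of y g] block_letters[OF y(3) \<open>c < y\<close>] \<open>c < y\<close> by simp
    have inner: "height g (y - 1) = height g c" "\<forall>m\<in>{c..y - 1}. height g c \<le> height g m"
      using less.hyps[where c = "c + 1" and d = "y - 1"] matched_interior[OF y(3) \<open>c < y\<close>] \<open>c < y\<close> y(1)
      by auto
    have tail: "height g d = height g y" "\<forall>m\<in>{y..d}. height g y \<le> height g m"
      using less.hyps[where c = "y + 1" and d = d] matched_after_block[OF less.prems(1) y(3) \<open>c < y\<close>]
        \<open>c < y\<close> y(1) less.prems(3) by auto
    have "height g y = height g (c - 1)" using up down inner(1) by simp
    moreover have "height g (c - 1) \<le> height g m" if m: "m \<in> {c - 1..d}" for m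
    proof -
      consider "m = c - 1" | "m \<in> {c..y - 1}" | "m \<in> {y..d}" using m by fastforce
      then show ?thesis using inner(2) tail(2) up \<open>height g y = height g (c - 1)\<close> by cases force+
    qed
    ultimately show ?thesis using tail(1) by simp
  qed
qed

lemma block_arc:
  assumes "{a, b} \<in> P" "a < b"
  shows "arc g a b"
proof -
  have "a \<in> free N L R" using block_free[OF assms] assms(2) by auto
  then have "1 \<le> a" unfolding free_def by auto
  then have up: "height g a = height g (a - 1) + 1"
    using height_pred[of a g] block_letters[OF assms] by simp
  have down: "height g b = height g (b - 1) - 1"
    using height_pred[of b g] block_letters[OF assms] assms(2) by simp
  have inner: "height g (b - 1) = height g a" "\<forall>m\<in>{a..b - 1}. height g a \<le> height g m"
    using matched_height[OF matched_interior[OF assms]] assms(2) by auto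
  show ?thesis unfolding arc_def using assms(2) up down inner by force
qed

lemma free_opener:
  assumes "x \<in> free N L R" "g x = 0"
  obtains z where "x < z" "{x, z} \<in> P"
proof -
  obtain z where z: "z \<noteq> x" "{x, z} \<in> P" by (rule free_partner[OF assms(1)])
  have "\<not> z < x" using block_letters[of z x] z assms(2) by (auto simp: insert_commute)
  then show thesis using that[of z] z by auto
qed

lemma free_closer:
  assumes "x \<in> free N L R" "g x = 1"
  obtains z where "z < x" "{z, x} \<in> P"
proof -
  obtain z where z: "z \<noteq> x" "{x, z} \<in> P" by (rule free_partner[OF assms(1)])
  have "\<not> x < z" using block_letters[of x z] z assms(2) by auto
  then show thesis using that[of z] z by (auto simp: insert_commute)
qed

lemma left_points_eq: "L = {k\<in>{1..N} - \<Union>P. g k = 1}"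
proof
  show "L \<subseteq> {k\<in>{1..N} - \<Union>P. g k = 1}"
    using L_subset letter_left block_subset_free unfolding free_def by blast
  show "{k\<in>{1..N} - \<Union>P. g k = 1} \<subseteq> L"
  proof
    fix k assume k: "k \<in> {k\<in>{1..N} - \<Union>P. g k = 1}"
    then have "k \<notin> free N L R" using free_in_block by blast
    then show "k \<in> L" using k letter_right unfolding free_def by force
  qed
qed

lemma right_points_eq: "R = {k\<in>{1..N} - \<Union>P. g k = 0}"
proof
  show "R \<subseteq> {k\<in>{1..N} - \<Union>P. g k = 0}"
    using R_subset letter_right block_subset_free unfolding free_def by blast
  show "{k\<in>{1..N} - \<Union>P. g k = 0} \<subseteq> R"
  proof
    fix k assume k: "k \<in> {k\<in>{1..N} - \<Union>P. g k = 0}"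
    then have "k \<notin> free N L R" using free_in_block by blast
    then show "k \<in> R" using k letter_left unfolding free_def by force
  qed
qed

end

lemma ext_patternI:
  assumes "(L, R, P) \<in> ext_link_patterns N"
  shows "ext_pattern N L R P (\<lambda>k. word N (L, R, P) ! (k - 1))"
  using assms nth_word by unfold_locales

lemma block_determined_by_word:
  assumes e1: "ext_pattern N L1 R1 P1 g" and e2: "ext_pattern N L2 R2 P2 g"
    and block: "{i, j} \<in> P1" "i < j"
  shows "{i, j} \<in> P2"
proof -
  have arc: "arc g i j" by (rule ext_pattern.block_arc[OF e1 block])
  have letters: "g i = 0" "g j = 1" using ext_pattern.block_letters[OF e1 block] by auto
  have "{i..j} \<subseteq> free N L1 R1" by (rule ext_pattern.block_free[OF e1 block])
  then have "i \<in> free N L1 R1" "j \<in> free N L1 R1" using block(2) by auto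
  then have range: "i \<in> {1..N}" "j \<in> {1..N}" unfolding free_def by auto
  consider "i \<in> free N L2 R2" | "j \<in> free N L2 R2" | "i \<notin> free N L2 R2" "j \<notin> free N L2 R2"
    by blast
  then show ?thesis
  proof cases
    case 1
    then obtain z where z: "i < z" "{i, z} \<in> P2" using ext_pattern.free_opener[OF e2 _ letters(1)] by blast
    have "z = j" using arc_unique_right[OF ext_pattern.block_arc[OF e2 z(2,1)] arc] .
    then show ?thesis using z by simp
  next
    case 2
    then obtain z where z: "z < j" "{z, j} \<in> P2" using ext_pattern.free_closer[OF e2 _ letters(2)] by blast
    have "z = i" using arc_unique_left[OF ext_pattern.block_arc[OF e2 z(2,1)] arc] .
    then show ?thesis using z by simp
  next
    case 3
    have "i \<in> R2" using 3(1) range(1) ext_pattern.letter_left[OF e2, of i] letters(1)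
      unfolding free_def by auto
    moreover have "j \<in> L2" using 3(2) range(2) ext_pattern.letter_right[OF e2, of j] letters(2)
      unfolding free_def by auto
    ultimately have "j < i" using ext_pattern.left_less_right[OF e2] by blast
    then show ?thesis using block(2) by simp
  qed
qed

lemma blocks_determined_by_word:
  assumes e1: "ext_pattern N L1 R1 P1 g" and e2: "ext_pattern N L2 R2 P2 g"
  shows "P1 \<subseteq> P2"
proof
  fix p assume "p \<in> P1"
  then obtain i j where "i < j" "p = {i, j}" by (rule ext_pattern.block_bounds[OF e1])
  then show "p \<in> P2" using block_determined_by_word[OF e1 e2] \<open>p \<in> P1\<close> by blast
qed

lemma inj_on_word: "inj_on (word N) (ext_link_patterns N)"
proof (rule inj_onI)
  fix x y assume x: "x \<in> ext_link_patterns N" and y: "y \<in> ext_link_patterns N"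
    and eq: "word N x = word N y"
  obtain L1 R1 P1 where x': "x = (L1, R1, P1)" by (cases x) auto
  obtain L2 R2 P2 where y': "y = (L2, R2, P2)" by (cases y) auto
  define g where "g = (\<lambda>k. word N x ! (k - 1))"
  have e1: "ext_pattern N L1 R1 P1 g" using ext_patternI[of L1 R1 P1 N] x x' g_def by simp
  have e2: "ext_pattern N L2 R2 P2 g" using ext_patternI[of L2 R2 P2 N] y y' g_def eq by simp
  have "P1 = P2" using blocks_determined_by_word[OF e1 e2] blocks_determined_by_word[OF e2 e1] by blast
  moreover have "L1 = L2" "R1 = R2"
    using ext_pattern.left_points_eq[OF e1] ext_pattern.left_points_eq[OF e2]
      ext_pattern.right_points_eq[OF e1] ext_pattern.right_points_eq[OF e2] \<open>P1 = P2\<close> by simp_all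
  ultimately show "x = y" using x' y' by simp
qed

locale binary_word =
  fixes N :: nat and g :: "nat \<Rightarrow> nat"
  assumes binary: "\<And>k. 1 \<le> k \<Longrightarrow> k \<le> N \<Longrightarrow> g k = 0 \<or> g k = 1"
begin

definition arcs :: "nat set set" where
  "arcs = {{i, j} | i j. 1 \<le> i \<and> j \<le> N \<and> arc g i j}"

definition left_points :: "nat set" where
  "left_points = {k\<in>{1..N}. g k = 1 \<and> (\<forall>m<k. height g k < height g m)}"

definition right_points :: "nat set" where
  "right_points = {k\<in>{1..N}. g k = 0 \<and> (\<forall>m\<in>{k..N}. height g (k - 1) < height g m)}"

lemma arcsE:
  assumes "p \<in> arcs"
  obtains i j where "p = {i, j}" "1 \<le> i" "j \<le> N" "arc g i j"
  using assms unfolding arcs_def by blast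

lemma arc_closer_letter: "arc g i j \<Longrightarrow> 1 \<le> i \<Longrightarrow> j \<le> N \<Longrightarrow> g j = 1"
  using arc_letters(2)[of g i j] binary[of j] unfolding arc_def by auto

lemma arc_of_arcs:
  assumes "{a, b} \<in> arcs" "a < b"
  shows "arc g a b"
proof -
  obtain i j where ij: "{a, b} = {i, j}" "arc g i j" by (rule arcsE[OF assms(1)])
  then have "i = a" "j = b" using assms(2) unfolding arc_def by (auto simp: doubleton_eq_iff)
  then show ?thesis using ij by simp
qed

text \<open>The last point before k at which the path is at most as high as after k is followed
  by the opener matching k.\<close>
lemma arc_to_closer:
  assumes "k \<in> {1..N}" "g k = 1" "k \<notin> left_points"
  obtains i where "1 \<le> i" "arc g i k"
proof -
  define Q where "Q = (\<lambda>m. m < k \<and> height g m \<le> height g k)"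
  have "\<exists>m. Q m" using assms unfolding left_points_def Q_def by (auto simp: not_less)
  moreover have "\<forall>m. Q m \<longrightarrow> m \<le> k" unfolding Q_def by simp
  ultimately obtain m0 where m0: "Q m0" and last: "\<And>m. Q m \<Longrightarrow> m \<le> m0"
    using Nat.ex_has_greatest_nat[of Q _ k] by metis
  have above: "height g k < height g m" if "m0 < m" "m < k" for m
    using last[of m] that unfolding Q_def by force
  have down: "height g k = height g (k - 1) - 1" using height_pred[of k g] assms by simp
  then have "m0 + 1 < k" using m0 unfolding Q_def by (cases "m0 = k - 1") auto
  then have "height g k < height g (Suc m0)" using above[of "Suc m0"] by simp
  then have "height g m0 = height g k" using m0 unfolding Q_def by (auto split: if_splits)
  then have "arc g (m0 + 1) k" unfolding arc_def using \<open>m0 + 1 < k\<close> above by auto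
  then show thesis using that[of "m0 + 1"] by simp
qed

text \<open>The first point after k at which the path comes back down to its height before k is the
  closer matching k.\<close>
lemma arc_from_opener:
  assumes "k \<in> {1..N}" "g k = 0" "k \<notin> right_points"
  obtains j where "j \<le> N" "arc g k j"
proof -
  define Q where "Q = (\<lambda>m. k \<le> m \<and> m \<le> N \<and> height g m \<le> height g (k - 1))"
  have "\<exists>m. Q m" using assms unfolding right_points_def Q_def by (auto simp: not_less)
  define j where "j = (LEAST m. Q m)"
  have Qj: "Q j" using LeastI_ex[OF \<open>\<exists>m. Q m\<close>] j_def by simp
  have "\<not> Q m" if "m < j" for m using not_less_Least[of m Q] that unfolding j_def by blast
  then have above: "height g (k - 1) < height g m" if "k \<le> m" "m < j" for m
    using that Qj unfolding Q_def by force
  have up: "height g k = height g (k - 1) + 1" using height_pred[of k g] assms by simp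
  then have "k < j" using Qj unfolding Q_def by (cases "j = k") auto
  then have "height g (k - 1) < height g (j - 1)" using above[of "j - 1"] by simp
  moreover have "height g j = height g (j - 1) + 1 \<or> height g j = height g (j - 1) - 1"
    using height_pred[of j g] \<open>k < j\<close> by auto
  ultimately have "height g j = height g (k - 1)" using Qj unfolding Q_def by auto
  then have "arc g k j" unfolding arc_def using \<open>k < j\<close> above by auto
  then show thesis using that Qj unfolding Q_def by blast
qed

lemma arc_free:
  assumes "1 \<le> i" "j \<le> N" "arc g i j"
  shows "{i..j} \<subseteq> free N left_points right_points"
proof
  fix m assume m: "m \<in> {i..j}"
  have low: "height g (i - 1) \<le> height g m" if "i \<le> m" "m \<le> j" for m
    using arc_above[OF assms(3), of m] assms(3) that unfolding arc_def by (cases "m = j") auto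
  have "m \<notin> left_points"
  proof
    assume "m \<in> left_points"
    then have "height g m < height g (i - 1)" unfolding left_points_def using assms(1) m by auto
    then show False using low m by force
  qed
  moreover have "m \<notin> right_points"
  proof
    assume "m \<in> right_points"
    then have "height g (m - 1) < height g j" unfolding right_points_def using assms(2) m by auto
    moreover have "height g (i - 1) \<le> height g (m - 1)" using low[of "m - 1"] m by (cases "m = i") auto
    ultimately show False using assms(3) unfolding arc_def by simp
  qed
  moreover have "m \<in> {1..N}" using m assms(1,2) by auto
  ultimately show "m \<in> free N left_points right_points" unfolding free_def by simp
qed

lemma left_points_less_right_points:
  assumes "l \<in> left_points" "r \<in> right_points"
  shows "l < r"
proof (rule ccontr)
  assume "\<not> l < r"
  moreover have "l \<noteq> r" using assms unfolding left_points_def right_points_def by auto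
  ultimately have "r < l" by simp
  then have "height g l < height g (r - 1)" using assms(1) unfolding left_points_def by simp
  moreover have "height g (r - 1) < height g l"
    using \<open>r < l\<close> assms unfolding left_points_def right_points_def by simp
  ultimately show False by simp
qed

lemma free_in_arc:
  assumes "x \<in> free N left_points right_points"
  obtains i j where "1 \<le> i" "j \<le> N" "arc g i j" "x \<in> {i, j}"
proof -
  have x: "x \<in> {1..N}" "x \<notin> left_points" "x \<notin> right_points" using assms unfolding free_def by auto
  show thesis
  proof (cases "g x = 0")
    case True
    obtain j where "j \<le> N" "arc g x j" by (rule arc_from_opener[OF x(1) True x(3)])
    then show thesis using that[of x j] x(1) by auto
  next
    case False
    then have "g x = 1" using binary[of x] x(1) by auto
    obtain i where "1 \<le> i" "arc g i x" by (rule arc_to_closer[OF x(1) \<open>g x = 1\<close> x(2)])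
    then show thesis using that[of i x] x(1) by auto
  qed
qed

lemma arc_in_max_interval:
  assumes "p \<in> arcs"
  shows "\<exists>I\<in>max_intervals N left_points right_points. p \<subseteq> I"
proof -
  obtain i j where ij: "p = {i, j}" "1 \<le> i" "j \<le> N" "arc g i j" by (rule arcsE[OF assms])
  have "i \<le> j" using ij(4) unfolding arc_def by simp
  then obtain I where "I \<in> max_intervals N left_points right_points" "{i..j} \<subseteq> I"
    by (rule interval_in_max_interval[OF _ arc_free[OF ij(2-4)]])
  moreover have "p \<subseteq> {i..j}" using ij(1) \<open>i \<le> j\<close> by simp
  ultimately show ?thesis by blast
qed

lemma arcs_eq_if_meet:
  assumes "p \<in> arcs" "q \<in> arcs" "x \<in> p" "x \<in> q"
  shows "p = q"
proof -
  obtain i j where ij: "p = {i, j}" "1 \<le> i" "j \<le> N" "arc g i j" by (rule arcsE[OF assms(1)])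
  obtain i' j' where ij': "q = {i', j'}" "1 \<le> i'" "j' \<le> N" "arc g i' j'" by (rule arcsE[OF assms(2)])
  have letters: "g i = 0" "g j = 1" "g i' = 0" "g j' = 1"
    using arc_letters(1)[OF ij(4,2)] arc_closer_letter[OF ij(4,2,3)]
      arc_letters(1)[OF ij'(4,2)] arc_closer_letter[OF ij'(4,2,3)] by simp_all
  have "x = i \<or> x = j" "x = i' \<or> x = j'" using assms(3,4) ij(1) ij'(1) by simp_all
  then consider "x = i" "x = i'" | "x = j" "x = j'" | "x = i" "x = j'" | "x = j" "x = i'"
    by blast
  then show ?thesis
  proof cases
    case 1
    then have "arc g i j'" using ij'(4) by simp
    then have "j = j'" by (rule arc_unique_right[OF ij(4)])
    then show ?thesis using 1 ij(1) ij'(1) by simp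
  next
    case 2
    then have "arc g i' j" using ij'(4) by simp
    then have "i = i'" by (rule arc_unique_left[OF ij(4)])
    then show ?thesis using 2 ij(1) ij'(1) by simp
  next
    case 3
    then show ?thesis using letters by simp
  next
    case 4
    then show ?thesis using letters by simp
  qed
qed

lemma max_interval_covered_by_arcs:
  assumes I: "I \<in> max_intervals N left_points right_points" and x: "x \<in> I"
  shows "\<exists>p\<in>arcs. p \<subseteq> I \<and> x \<in> p"
proof -
  obtain a b where "I = {a..b}" "I \<subseteq> free N left_points right_points"
    by (rule max_interval_bounds[OF I])
  then have "x \<in> free N left_points right_points" using x by blast
  then obtain i j where ij: "1 \<le> i" "j \<le> N" "arc g i j" "x \<in> {i, j}"
    by (rule free_in_arc)
  then have arc: "{i, j} \<in> arcs" unfolding arcs_def by blast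
  then obtain J where J: "J \<in> max_intervals N left_points right_points" "{i, j} \<subseteq> J"
    using arc_in_max_interval[OF arc] by blast
  have "x \<in> J" using J(2) ij(4) by blast
  then have "J = I" using max_intervals_eq_if_meet[OF J(1) I] x by simp
  then show ?thesis using J arc ij(4) by blast
qed

lemma link_pattern_arcs:
  assumes I: "I \<in> max_intervals N left_points right_points"
  shows "link_pattern I {p\<in>arcs. p \<subseteq> I}"
  unfolding link_pattern_def
proof (intro conjI)
  show "\<Union>{p\<in>arcs. p \<subseteq> I} = I"
    using max_interval_covered_by_arcs[OF I] by blast
  show "\<forall>p\<in>{p\<in>arcs. p \<subseteq> I}. card p = 2"
  proof
    fix p assume "p \<in> {p\<in>arcs. p \<subseteq> I}"
    then have "p \<in> arcs" by simp
    then obtain i j where "p = {i, j}" "arc g i j" by (rule arcsE)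
    then show "card p = 2" unfolding arc_def by simp
  qed
  show "\<forall>p\<in>{p\<in>arcs. p \<subseteq> I}. \<forall>q\<in>{p\<in>arcs. p \<subseteq> I}. p \<noteq> q \<longrightarrow> p \<inter> q = {}"
    using arcs_eq_if_meet by blast
  show "\<not> (\<exists>i j k l. i < j \<and> j < k \<and> k < l \<and>
      {i, k} \<in> {p\<in>arcs. p \<subseteq> I} \<and> {j, l} \<in> {p\<in>arcs. p \<subseteq> I})"
  proof
    assume "\<exists>i j k l. i < j \<and> j < k \<and> k < l \<and>
      {i, k} \<in> {p\<in>arcs. p \<subseteq> I} \<and> {j, l} \<in> {p\<in>arcs. p \<subseteq> I}"
    then obtain i j k l where "i < j" "j < k" "k < l" "{i, k} \<in> arcs" "{j, l} \<in> arcs" by blast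
    then show False using arcs_noncrossing arc_of_arcs by (meson order_less_trans)
  qed
qed

lemma decoded_pattern_in_ext: "(left_points, right_points, arcs) \<in> ext_link_patterns N"
proof -
  have "left_points \<subseteq> {1..N}" "right_points \<subseteq> {1..N}"
    unfolding left_points_def right_points_def by auto
  then show ?thesis
    unfolding ext_link_patterns_def mem_Collect_eq prod.case
    using left_points_less_right_points link_pattern_arcs arc_in_max_interval by blast
qed

lemma is_closer_iff:
  assumes "k \<in> {1..N}" "k \<notin> left_points"
  shows "(\<exists>p\<in>arcs. k \<in> p \<and> k = Max p) \<longleftrightarrow> g k = 1"
proof
  assume "\<exists>p\<in>arcs. k \<in> p \<and> k = Max p"
  then obtain p where p: "p \<in> arcs" "k = Max p" by blast
  obtain i j where ij: "p = {i, j}" "1 \<le> i" "j \<le> N" "arc g i j" by (rule arcsE[OF p(1)])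
  then have "Max p = j" unfolding arc_def by simp
  then show "g k = 1" using p(2) arc_closer_letter[OF ij(4,2,3)] by simp
next
  assume "g k = 1"
  then obtain i where i: "1 \<le> i" "arc g i k" by (rule arc_to_closer[OF assms(1) _ assms(2)])
  then have "{i, k} \<in> arcs" using assms(1) unfolding arcs_def by auto
  moreover have "Max {i, k} = k" using i(2) unfolding arc_def by simp
  ultimately show "\<exists>p\<in>arcs. k \<in> p \<and> k = Max p" by (intro bexI[of _ "{i, k}"]) auto
qed

lemma letter_decode:
  assumes "k \<in> {1..N}"
  shows "letter left_points right_points arcs k = g k"
proof -
  consider "k \<in> left_points" | "k \<notin> left_points" "k \<in> right_points"
    | "k \<notin> left_points" "k \<notin> right_points" by blast
  then show ?thesis
  proof cases
    case 1
    then show ?thesis unfolding letter_def left_points_def by simp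
  next
    case 2
    then show ?thesis unfolding letter_def right_points_def by simp
  next
    case 3
    then show ?thesis using is_closer_iff[OF assms 3(1)] binary[of k] assms
      unfolding letter_def by auto
  qed
qed

lemma word_decode: "word N (left_points, right_points, arcs) = map g [1..<N+1]"
  unfolding word_eq_map_letter using letter_decode by (simp del: upt_Suc)

end

lemma binary_word_in_image:
  assumes "length w = N" "set w \<subseteq> {0, 1}"
  shows "w \<in> word N ` ext_link_patterns N"
proof -
  define g where "g k = w ! (k - 1)" for k
  interpret binary_word N g
  proof
    fix k :: nat assume "1 \<le> k" "k \<le> N"
    then have "w ! (k - 1) \<in> set w" using assms(1) by simp
    then show "g k = 0 \<or> g k = 1" using assms(2) unfolding g_def by auto
  qed
  have "map g [1..<N+1] = w" by (rule nth_equalityI) (simp_all add: g_def assms(1) del: upt_Suc)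
  then show ?thesis using word_decode decoded_pattern_in_ext by (metis image_eqI)
qed

theorem proposition1p6:
  fixes N :: nat
  shows "bij_betw (word N) (ext_link_patterns N) {w :: nat list. length w = N \<and> set w \<subseteq> {0, 1}}"
proof (rule bij_betw_imageI[OF inj_on_word])
  show "word N ` ext_link_patterns N = {w. length w = N \<and> set w \<subseteq> {0, 1}}"
    using word_binary binary_word_in_image by blast
qed

end
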